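(* Let $A,B$ be disjoint subsets of $S$, and let $a\in A$, $b\in B$, $c\in S$ satisfy $r(c,a)>r(a,c)>0$ and $r(c,b)>r(b,c)>0$. Then, as $N\to\infty$, $$\sup_{0\le i\le\lfloor N/2\rfloor}\left|h_{\mathcal{E}_N(A),\mathcal{E}_N(B)}(\zeta_i^{a,c})-1\right|=o(1)\quad\text{and}\quad\sup_{0\le i\le\lfloor N/2\rfloor}h_{\mathcal{E}_N(A),\mathcal{E}_N(B)}(\zeta_i^{b,c})=o(1).$$
   Context: $S$ is a finite set, $r:S\times S\to[0,\infty)$ transition rates of an irreducible continuous-time random walk on $S$ with $r(x,x)=0$, reversible w.r.t. a probability measure $m$. $(d_N)$ positive with $d_N\to0$ and $d_N\log N\to0$. $\mathcal{H}_N=\{\eta\in\mathbb{N}^S:\sum_x\eta_x=N\}$; the inclusion process is the Markov chain on $\mathcal{H}_N$ with generator $(\mathcal{L}_Nf)(\eta)=\sum_{x,y}\eta_x(d_N+\eta_y)r(x,y)\{f(\sigma^{x,y}\eta)-f(\eta)\}$, $\sigma^{x,y}\eta$ moving one particle from $x$ to $y$ if possible. $\xi_N^x$: all $N$ particles at $x$; $\mathcal{E}_N(A)=\{\xi_N^x:x\in A\}$. $h_{\mathcal{A},\mathcal{B}}(\eta)=\mathbb{P}_\eta[\tau_{\mathcal{A}}<\tau_{\mathcal{B}}]$ with $\tau$ hitting times. For $x,y\in S$ and $0\le i\le N$, $\zeta_i^{x,y}$ is the configuration with $N-i$ particles at $x$, $i$ particles at $y$ and none elsewhere. *)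

theory Defs
  imports "HOL-Analysis.Analysis"
begin

text \<open>Generic hitting probabilities for a discrete-time jump chain with transition
  probabilities P on a finite state space X:
  h(A,B)(eta) = P_eta[tau_A < tau_B], computed as the sum, over all finite paths
  eta = eta_0, eta_1, ..., eta_k with eta_k in A and eta_0,...,eta_(k-1) not in A or B,
  of the path probabilities.  A continuous-time chain and its embedded jump chain
  have the same hitting probabilities.\<close>

fun path_prob :: "('s \<Rightarrow> 's \<Rightarrow> real) \<Rightarrow> 's \<Rightarrow> 's list \<Rightarrow> real" where
  "path_prob P x [] = 1"
| "path_prob P x (y # ys) = P x y * path_prob P y ys"

definition hit_paths :: "'s set \<Rightarrow> 's set \<Rightarrow> 's set \<Rightarrow> nat \<Rightarrow> 's list set" where
  "hit_paths X A B n = {ys. length ys = n \<and> set ys \<subseteq> X \<and> ys \<noteq> [] \<and> last ys \<in> A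
      \<and> (\<forall>y\<in>set (butlast ys). y \<notin> A \<and> y \<notin> B)}"

definition hit_prob :: "('s \<Rightarrow> 's \<Rightarrow> real) \<Rightarrow> 's set \<Rightarrow> 's set \<Rightarrow> 's set \<Rightarrow> 's \<Rightarrow> real" where
  "hit_prob P X A B x =
     (if x \<in> A then 1 else if x \<in> B then 0
      else (\<Sum>n. \<Sum>ys\<in>hit_paths X A B (Suc n). path_prob P x ys))"

text \<open>The inclusion process on S = UNIV :: 'a set (finite type).\<close>

definition config_space :: "nat \<Rightarrow> ('a::finite \<Rightarrow> nat) set" where
  "config_space N = {\<eta>. (\<Sum>x\<in>UNIV. \<eta> x) = N}"

definition sigma_move :: "'a \<Rightarrow> 'a \<Rightarrow> ('a \<Rightarrow> nat) \<Rightarrow> ('a \<Rightarrow> nat)" where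
  "sigma_move x y \<eta> =
     (if 0 < \<eta> x then (\<lambda>z. \<eta> z - (if z = x then 1 else 0) + (if z = y then 1 else 0)) else \<eta>)"

text \<open>Jump rate from eta to zeta (zeta different from eta) of the generator
  (L f)(eta) = sum_{x,y} eta_x (d + eta_y) r(x,y) (f(sigma^{x,y} eta) - f(eta)).\<close>
definition incl_rate :: "('a::finite \<Rightarrow> 'a \<Rightarrow> real) \<Rightarrow> real \<Rightarrow> ('a \<Rightarrow> nat) \<Rightarrow> ('a \<Rightarrow> nat) \<Rightarrow> real" where
  "incl_rate r d \<eta> \<zeta> =
     (\<Sum>x\<in>UNIV. \<Sum>y\<in>UNIV. if sigma_move x y \<eta> = \<zeta> \<and> \<zeta> \<noteq> \<eta>
                              then real (\<eta> x) * (d + real (\<eta> y)) * r x y else 0)"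

definition incl_total_rate :: "('a::finite \<Rightarrow> 'a \<Rightarrow> real) \<Rightarrow> real \<Rightarrow> nat \<Rightarrow> ('a \<Rightarrow> nat) \<Rightarrow> real" where
  "incl_total_rate r d N \<eta> = (\<Sum>\<zeta>\<in>config_space N. incl_rate r d \<eta> \<zeta>)"

definition incl_jump :: "('a::finite \<Rightarrow> 'a \<Rightarrow> real) \<Rightarrow> real \<Rightarrow> nat \<Rightarrow> ('a \<Rightarrow> nat) \<Rightarrow> ('a \<Rightarrow> nat) \<Rightarrow> real" where
  "incl_jump r d N \<eta> \<zeta> = incl_rate r d \<eta> \<zeta> / incl_total_rate r d N \<eta>"

definition incl_hit :: "('a::finite \<Rightarrow> 'a \<Rightarrow> real) \<Rightarrow> real \<Rightarrow> nat \<Rightarrow> ('a \<Rightarrow> nat) set \<Rightarrow> ('a \<Rightarrow> nat) set \<Rightarrow> ('a \<Rightarrow> nat) \<Rightarrow> real" where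
  "incl_hit r d N \<A> \<B> \<eta> = hit_prob (incl_jump r d N) (config_space N) \<A> \<B> \<eta>"

definition xi_conf :: "nat \<Rightarrow> 'a \<Rightarrow> ('a \<Rightarrow> nat)" where
  "xi_conf N x = (\<lambda>z. if z = x then N else 0)"

definition E_set :: "nat \<Rightarrow> 'a set \<Rightarrow> ('a \<Rightarrow> nat) set" where
  "E_set N A = xi_conf N ` A"

definition zeta_conf :: "nat \<Rightarrow> 'a \<Rightarrow> 'a \<Rightarrow> nat \<Rightarrow> ('a \<Rightarrow> nat)" where
  "zeta_conf N x y i = (\<lambda>z. if z = x then N - i else if z = y then i else 0)"

definition irreducible_rates :: "('a \<Rightarrow> 'a \<Rightarrow> real) \<Rightarrow> bool" where
  "irreducible_rates r \<longleftrightarrow> (\<forall>x y. x \<noteq> y \<longrightarrow> (x, y) \<in> {(u, v). 0 < r u v}\<^sup>+)"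

end

theory Submission
  imports Defs
begin

(* Along the segment zeta_0, ..., zeta_N of configurations from xi^x = zeta_0 to xi^c = zeta_N
   the jump chain moves like a birth-death chain: zeta_j -> zeta_(j-1) at rate j (d + N - j) r(c,x),
   zeta_j -> zeta_(j+1) at rate (N - j) (d + j) r(x,c), and it leaves the segment at rate O(d N).
   As r(c,x) > r(x,c), the drift towards xi^x wins.  Both 1 - h (for x in A) and h (for x in B)
   vanish at zeta_0 and are subsolutions of this birth-death chain with a source O(d N), so by a
   maximum principle they are dominated by the explicit supersolution sigma H_j + omega^(J - j)
   (harmonic numbers H_j, omega < 1, J = N - N/4, sigma = O(d)), which is O(d log N) + omega^(N/4)
   for j <= N/2. *)

section \<open>Hitting probabilities of a substochastic kernel\<close>

lemma hit_paths_Suc_0: "hit_paths X A B (Suc 0) = (\<lambda>z. [z]) ` (X \<inter> A)"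
proof (rule set_eqI, rule iffI)
  fix ys assume "ys \<in> hit_paths X A B (Suc 0)"
  then obtain z where "ys = [z]" "z \<in> X" "z \<in> A"
    by (auto simp: hit_paths_def length_Suc_conv)
  then show "ys \<in> (\<lambda>z. [z]) ` (X \<inter> A)" by auto
qed (auto simp: hit_paths_def)

lemma hit_paths_Suc_Suc:
  "hit_paths X A B (Suc (Suc n)) = (\<lambda>(z, ys). z # ys) ` ((X - A - B) \<times> hit_paths X A B (Suc n))"
proof (rule set_eqI, rule iffI)
  fix ys assume ys: "ys \<in> hit_paths X A B (Suc (Suc n))"
  then obtain z zs where zs: "ys = z # zs" "length zs = Suc n"
    by (auto simp: hit_paths_def length_Suc_conv)
  then have "zs \<noteq> []" "butlast ys = z # butlast zs" "last ys = last zs" by auto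
  then show "ys \<in> (\<lambda>(z, ys). z # ys) ` ((X - A - B) \<times> hit_paths X A B (Suc n))"
    using ys zs by (auto simp: hit_paths_def)
next
  fix ys assume "ys \<in> (\<lambda>(z, ys). z # ys) ` ((X - A - B) \<times> hit_paths X A B (Suc n))"
  then obtain z zs where zs: "ys = z # zs" "z \<in> X - A - B" "zs \<in> hit_paths X A B (Suc n)"
    by auto
  then have "zs \<noteq> []" by (auto simp: hit_paths_def)
  then have "butlast ys = z # butlast zs" "last ys = last zs" using zs by auto
  then show "ys \<in> hit_paths X A B (Suc (Suc n))"
    using zs \<open>zs \<noteq> []\<close> by (auto simp: hit_paths_def)
qed

text \<open>The probability of entering A, before B, at step n + 1 (not n).\<close>

definition hit_at :: "('s \<Rightarrow> 's \<Rightarrow> real) \<Rightarrow> 's set \<Rightarrow> 's set \<Rightarrow> 's set \<Rightarrow> nat \<Rightarrow> 's \<Rightarrow> real" where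
  "hit_at P X A B n x = (\<Sum>ys\<in>hit_paths X A B (Suc n). path_prob P x ys)"

lemma hit_at_0: "hit_at P X A B 0 x = (\<Sum>z\<in>X \<inter> A. P x z)"
  unfolding hit_at_def hit_paths_Suc_0 by (subst sum.reindex) (auto simp: inj_on_def)

lemma hit_at_Suc: "hit_at P X A B (Suc n) x = (\<Sum>z\<in>X - A - B. P x z * hit_at P X A B n z)"
proof -
  have "hit_at P X A B (Suc n) x
      = (\<Sum>p\<in>(X - A - B) \<times> hit_paths X A B (Suc n). path_prob P x (fst p # snd p))"
    unfolding hit_at_def hit_paths_Suc_Suc
    by (subst sum.reindex) (auto simp: inj_on_def case_prod_beta)
  also have "\<dots> = (\<Sum>z\<in>X - A - B. \<Sum>ys\<in>hit_paths X A B (Suc n). path_prob P x (z # ys))"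
    by (simp add: sum.cartesian_product case_prod_beta)
  also have "\<dots> = (\<Sum>z\<in>X - A - B. P x z * hit_at P X A B n z)"
    by (simp add: hit_at_def sum_distrib_left)
  finally show ?thesis .
qed

lemma hit_prob_eq_suminf:
  "x \<notin> A \<Longrightarrow> x \<notin> B \<Longrightarrow> hit_prob P X A B x = (\<Sum>n. hit_at P X A B n x)"
  by (simp add: hit_prob_def hit_at_def)

locale substochastic =
  fixes P :: "'s \<Rightarrow> 's \<Rightarrow> real" and X :: "'s set"
  assumes finite_space: "finite X"
    and nonneg: "\<And>x y. x \<in> X \<Longrightarrow> y \<in> X \<Longrightarrow> 0 \<le> P x y"
    and row_sum_le_1: "\<And>x. x \<in> X \<Longrightarrow> (\<Sum>y\<in>X. P x y) \<le> 1"
begin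

lemma hit_at_nonneg: "x \<in> X \<Longrightarrow> 0 \<le> hit_at P X A B n x"
proof (induction n arbitrary: x)
  case 0
  then show ?case by (auto simp: hit_at_0 intro!: sum_nonneg nonneg)
next
  case (Suc n)
  then show ?case by (auto simp: hit_at_Suc intro!: sum_nonneg mult_nonneg_nonneg nonneg)
qed

lemma sum_hit_at_le_1: "x \<in> X \<Longrightarrow> (\<Sum>n<M. hit_at P X A B n x) \<le> 1"
proof (induction M arbitrary: x)
  case 0
  then show ?case by simp
next
  case (Suc M)
  have "(\<Sum>n<Suc M. hit_at P X A B n x) = hit_at P X A B 0 x + (\<Sum>n<M. hit_at P X A B (Suc n) x)"
    by (rule sum.lessThan_Suc_shift)
  also have "\<dots> = (\<Sum>z\<in>X \<inter> A. P x z) + (\<Sum>z\<in>X - A - B. P x z * (\<Sum>n<M. hit_at P X A B n z))"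
    by (simp add: hit_at_0 hit_at_Suc sum_distrib_left sum.swap[of _ "{..<M}"])
  also have "\<dots> \<le> (\<Sum>z\<in>X \<inter> A. P x z) + (\<Sum>z\<in>X - A - B. P x z)"
    using Suc nonneg by (intro add_left_mono sum_mono) (simp add: mult_left_le)
  also have "\<dots> = (\<Sum>z\<in>(X \<inter> A) \<union> (X - A - B). P x z)"
    using finite_space by (intro sum.union_disjoint[symmetric]) auto
  also have "\<dots> \<le> (\<Sum>z\<in>X. P x z)"
    using finite_space Suc nonneg by (intro sum_mono2) auto
  also have "\<dots> \<le> 1" using row_sum_le_1 Suc by auto
  finally show ?case .
qed

lemma summable_hit_at: "x \<in> X \<Longrightarrow> summable (\<lambda>n. hit_at P X A B n x)"
  by (rule summableI_nonneg_bounded[where x=1]) (auto intro: hit_at_nonneg sum_hit_at_le_1)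

lemma hit_prob_bounds: "x \<in> X \<Longrightarrow> 0 \<le> hit_prob P X A B x \<and> hit_prob P X A B x \<le> 1"
proof (cases "x \<in> A \<or> x \<in> B")
  case True
  then show ?thesis by (auto simp: hit_prob_def)
next
  case False
  assume "x \<in> X"
  then show ?thesis
    using False by (auto simp: hit_prob_eq_suminf
      intro!: suminf_nonneg suminf_le_const summable_hit_at hit_at_nonneg sum_hit_at_le_1)
qed

lemma hit_prob_nonneg: "x \<in> X \<Longrightarrow> 0 \<le> hit_prob P X A B x"
  using hit_prob_bounds by blast

lemma hit_prob_le_1: "x \<in> X \<Longrightarrow> hit_prob P X A B x \<le> 1"
  using hit_prob_bounds by blast

lemma hit_prob_harmonic:
  assumes x: "x \<in> X" "x \<notin> A" "x \<notin> B"
  shows "hit_prob P X A B x = (\<Sum>y\<in>X. P x y * hit_prob P X A B y)"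
proof -
  let ?h = "hit_prob P X A B"
  have "?h x = (\<Sum>n. hit_at P X A B (Suc n) x) + hit_at P X A B 0 x"
    using x suminf_split_head[OF summable_hit_at[OF x(1)]] by (simp add: hit_prob_eq_suminf)
  also have "(\<Sum>n. hit_at P X A B (Suc n) x) = (\<Sum>z\<in>X - A - B. \<Sum>n. P x z * hit_at P X A B n z)"
    unfolding hit_at_Suc
    by (rule suminf_sum) (auto intro!: summable_mult summable_hit_at)
  also have "\<dots> = (\<Sum>z\<in>X - A - B. P x z * ?h z)"
    by (intro sum.cong refl) (auto simp: suminf_mult hit_prob_eq_suminf summable_hit_at)
  finally have h_x: "?h x = (\<Sum>z\<in>X - A - B. P x z * ?h z) + (\<Sum>z\<in>X \<inter> A. P x z * ?h z)"
    by (simp add: hit_at_0 hit_prob_def)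
  have "(\<Sum>y\<in>X. P x y * ?h y) = (\<Sum>y\<in>(X - A - B) \<union> (X \<inter> A) \<union> (X \<inter> B - A). P x y * ?h y)"
    by (rule sum.cong) auto
  also have "\<dots> = (\<Sum>z\<in>X - A - B. P x z * ?h z) + (\<Sum>z\<in>X \<inter> A. P x z * ?h z)
      + (\<Sum>z\<in>X \<inter> B - A. P x z * ?h z)"
    using finite_space by (subst sum.union_disjoint, auto)+
  also have "(\<Sum>z\<in>X \<inter> B - A. P x z * ?h z) = 0"
    by (rule sum.neutral) (auto simp: hit_prob_def)
  finally show ?thesis using h_x by simp
qed

lemma hit_prob_two_neighbours:
  assumes x: "x \<in> X" "x \<notin> A" "x \<notin> B" and y: "y1 \<in> X" "y2 \<in> X" "y1 \<noteq> y2"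
    and p: "0 \<le> p1" "p1 \<le> P x y1" "0 \<le> p2" "p2 \<le> P x y2"
  shows "p1 * hit_prob P X A B y1 + p2 * hit_prob P X A B y2 \<le> hit_prob P X A B x"
    and "hit_prob P X A B x \<le> p1 * hit_prob P X A B y1 + p2 * hit_prob P X A B y2 + (1 - p1 - p2)"
proof -
  let ?h = "hit_prob P X A B"
  let ?R = "\<Sum>y\<in>X - {y1, y2}. P x y * ?h y"
  have split: "(\<Sum>y\<in>X. f y) = f y1 + f y2 + (\<Sum>y\<in>X - {y1, y2}. f y)" for f :: "'s \<Rightarrow> real"
  proof -
    have "(\<Sum>y\<in>X. f y) = (\<Sum>y\<in>X - {y1, y2}. f y) + (\<Sum>y\<in>{y1, y2}. f y)"
      using y finite_space by (intro sum.subset_diff) auto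
    then show ?thesis using y(3) by simp
  qed
  have h_x: "?h x = P x y1 * ?h y1 + P x y2 * ?h y2 + ?R"
    using hit_prob_harmonic[OF x] split[of "\<lambda>y. P x y * ?h y"] by simp
  have "0 \<le> ?R" using nonneg[OF x(1)] hit_prob_nonneg by (auto intro!: sum_nonneg)
  have "?R \<le> (\<Sum>y\<in>X - {y1, y2}. P x y)"
    using nonneg[OF x(1)] hit_prob_nonneg hit_prob_le_1 by (auto intro!: sum_mono simp: mult_left_le)
  also have "\<dots> \<le> 1 - P x y1 - P x y2"
    using split[of "P x"] row_sum_le_1[OF x(1)] by simp
  finally have "?R \<le> 1 - P x y1 - P x y2" .
  have "p1 * ?h y1 \<le> P x y1 * ?h y1" "p2 * ?h y2 \<le> P x y2 * ?h y2"
    using p y hit_prob_nonneg by (auto intro!: mult_right_mono)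
  then show "p1 * ?h y1 + p2 * ?h y2 \<le> ?h x"
    using h_x \<open>0 \<le> ?R\<close> by linarith
  have "p1 * (1 - ?h y1) \<le> P x y1 * (1 - ?h y1)" "p2 * (1 - ?h y2) \<le> P x y2 * (1 - ?h y2)"
    using p y hit_prob_le_1 by (auto intro!: mult_right_mono)
  then show "?h x \<le> p1 * ?h y1 + p2 * ?h y2 + (1 - p1 - p2)"
    using h_x \<open>?R \<le> 1 - P x y1 - P x y2\<close> by (simp add: algebra_simps)
qed

end

section \<open>Rates of the inclusion process\<close>

lemma finite_config_space: "finite (config_space N :: ('a::finite \<Rightarrow> nat) set)"
proof (rule finite_subset)
  show "config_space N \<subseteq> Pi\<^sub>E (UNIV :: 'a set) (\<lambda>_. {..N})"
  proof
    fix \<eta> :: "'a \<Rightarrow> nat" assume "\<eta> \<in> config_space N"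
    then have "\<eta> z \<le> N" for z
      unfolding config_space_def using member_le_sum[of z UNIV \<eta>] by auto
    then show "\<eta> \<in> Pi\<^sub>E UNIV (\<lambda>_. {..N})" by (auto simp: PiE_UNIV_domain)
  qed
qed (rule finite_PiE; simp)

lemma sigma_move_mem_config_space:
  assumes "\<eta> \<in> config_space N"
  shows "sigma_move x y \<eta> \<in> config_space N"
proof (cases "0 < \<eta> x")
  case True
  let ?f = "\<lambda>z. \<eta> z - (if z = x then 1 else 0) + (if z = y then 1 else 0)"
  have "(\<Sum>z\<in>UNIV. ?f z + (if z = x then 1 else 0)) = (\<Sum>z\<in>UNIV. \<eta> z + (if z = y then 1 else 0))"
    using True by (intro sum.cong) auto
  then have "(\<Sum>z\<in>UNIV. ?f z) + 1 = (\<Sum>z\<in>UNIV. \<eta> z) + 1"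
    by (simp add: sum.distrib)
  then show ?thesis using assms True by (simp add: config_space_def sigma_move_def)
qed (use assms in \<open>simp add: sigma_move_def\<close>)

lemma sigma_move_eq_self: "sigma_move x y \<eta> = \<eta> \<Longrightarrow> x \<noteq> y \<Longrightarrow> \<eta> x = 0"
  by (auto simp: sigma_move_def fun_eq_iff split: if_splits dest: spec[of _ x])

lemma incl_total_rate_eq:
  assumes \<eta>: "\<eta> \<in> config_space N" and r_diag: "\<And>x. r x x = 0"
  shows "incl_total_rate r d N \<eta> = (\<Sum>x\<in>UNIV. \<Sum>y\<in>UNIV. real (\<eta> x) * (d + real (\<eta> y)) * r x y)"
proof -
  have "incl_total_rate r d N \<eta> = (\<Sum>x\<in>UNIV. \<Sum>y\<in>UNIV. \<Sum>\<zeta>\<in>config_space N.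
      if sigma_move x y \<eta> = \<zeta> \<and> \<zeta> \<noteq> \<eta> then real (\<eta> x) * (d + real (\<eta> y)) * r x y else 0)"
    unfolding incl_total_rate_def incl_rate_def
    by (subst sum.swap) (simp add: sum.swap[of _ UNIV "config_space N"])
  also have "\<dots> = (\<Sum>x\<in>UNIV. \<Sum>y\<in>UNIV. real (\<eta> x) * (d + real (\<eta> y)) * r x y)"
  proof (intro sum.cong refl)
    fix x y
    let ?w = "real (\<eta> x) * (d + real (\<eta> y)) * r x y"
    have "(\<Sum>\<zeta>\<in>config_space N. if sigma_move x y \<eta> = \<zeta> \<and> \<zeta> \<noteq> \<eta> then ?w else 0)
        = (\<Sum>\<zeta>\<in>config_space N. if sigma_move x y \<eta> = \<zeta> then (if sigma_move x y \<eta> \<noteq> \<eta> then ?w else 0) else 0)"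
      by (rule sum.cong) auto
    also have "\<dots> = (if sigma_move x y \<eta> \<noteq> \<eta> then ?w else 0)"
      by (cases "sigma_move x y \<eta> \<noteq> \<eta>")
        (simp_all only: if_True if_False sum.delta'[OF finite_config_space]
          sigma_move_mem_config_space[OF \<eta>] sum.neutral_const if_cancel)
    also have "\<dots> = ?w"
      using sigma_move_eq_self[of x y \<eta>] r_diag by (cases "x = y") auto
    finally show "(\<Sum>\<zeta>\<in>config_space N. if sigma_move x y \<eta> = \<zeta> \<and> \<zeta> \<noteq> \<eta> then ?w else 0) = ?w" .
  qed
  finally show ?thesis .
qed

lemma incl_rate_nonneg: "(\<And>x y. 0 \<le> r x y) \<Longrightarrow> 0 \<le> d \<Longrightarrow> 0 \<le> incl_rate r d \<eta> \<zeta>"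
  unfolding incl_rate_def by (auto intro!: sum_nonneg)

lemma incl_rate_ge:
  assumes r_nonneg: "\<And>x y. 0 \<le> r x y" and "0 \<le> d" and move: "sigma_move x y \<eta> = \<zeta>" "\<zeta> \<noteq> \<eta>"
  shows "real (\<eta> x) * (d + real (\<eta> y)) * r x y \<le> incl_rate r d \<eta> \<zeta>"
proof -
  let ?g = "\<lambda>x y. if sigma_move x y \<eta> = \<zeta> \<and> \<zeta> \<noteq> \<eta> then real (\<eta> x) * (d + real (\<eta> y)) * r x y else 0"
  have g_nonneg: "0 \<le> ?g x y" for x y using assms by auto
  have "real (\<eta> x) * (d + real (\<eta> y)) * r x y = ?g x y" using move by simp
  also have "\<dots> \<le> (\<Sum>y'\<in>UNIV. ?g x y')" by (rule member_le_sum) (use g_nonneg in auto)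
  also have "\<dots> \<le> (\<Sum>x'\<in>UNIV. \<Sum>y'\<in>UNIV. ?g x' y')"
    by (rule member_le_sum[where f="\<lambda>x'. \<Sum>y'\<in>UNIV. ?g x' y'"]) (auto intro: sum_nonneg g_nonneg)
  finally show ?thesis by (simp add: incl_rate_def)
qed

lemma substochastic_incl_jump:
  assumes "\<And>x y. 0 \<le> r x y" "0 \<le> d"
  shows "substochastic (incl_jump r d N) (config_space N)"
proof
  show "finite (config_space N)" by (rule finite_config_space)
  show "0 \<le> incl_jump r d N \<eta> \<zeta>" for \<eta> \<zeta>
    unfolding incl_jump_def incl_total_rate_def using assms
    by (auto intro!: divide_nonneg_nonneg sum_nonneg incl_rate_nonneg)
  show "(\<Sum>\<zeta>\<in>config_space N. incl_jump r d N \<eta> \<zeta>) \<le> 1" for \<eta>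
    unfolding incl_jump_def sum_divide_distrib[symmetric] incl_total_rate_def[symmetric]
    by (cases "incl_total_rate r d N \<eta> = 0") auto
qed

lemma incl_hit_bounds:
  assumes "\<And>x y. 0 \<le> r x y" "0 \<le> d" "\<eta> \<in> config_space N"
  shows "0 \<le> incl_hit r d N \<A> \<B> \<eta>" and "incl_hit r d N \<A> \<B> \<eta> \<le> 1"
proof -
  interpret substochastic "incl_jump r d N" "config_space N"
    by (rule substochastic_incl_jump) (use assms in auto)
  show "0 \<le> incl_hit r d N \<A> \<B> \<eta>" "incl_hit r d N \<A> \<B> \<eta> \<le> 1"
    unfolding incl_hit_def using assms(3) by (auto intro: hit_prob_nonneg hit_prob_le_1)
qed

lemma sum_zeta_conf:
  fixes x c :: "'a::finite"
  assumes "x \<noteq> c"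
  shows "(\<Sum>z\<in>UNIV. real (zeta_conf N x c j z) * g z) = real (N - j) * g x + real j * g c"
proof -
  have "(\<Sum>z\<in>UNIV. real (zeta_conf N x c j z) * g z)
      = (\<Sum>z\<in>UNIV. (if z = x then real (N - j) * g x else 0) + (if z = c then real j * g c else 0))"
    using assms by (intro sum.cong) (auto simp: zeta_conf_def)
  also have "\<dots> = real (N - j) * g x + real j * g c" by (simp add: sum.distrib sum.delta)
  finally show ?thesis .
qed

lemma zeta_conf_mem_config_space: "x \<noteq> c \<Longrightarrow> j \<le> N \<Longrightarrow> zeta_conf N x c j \<in> config_space N"
  using sum_zeta_conf[of x c N j "\<lambda>_. 1"]
  by (simp add: config_space_def flip: of_nat_sum)

lemma zeta_conf_0: "zeta_conf N x c 0 = xi_conf N x"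
  by (auto simp: zeta_conf_def xi_conf_def)

lemma zeta_conf_inj: "zeta_conf N x c j = zeta_conf N x c k \<Longrightarrow> x \<noteq> c \<Longrightarrow> j \<le> N \<Longrightarrow> k \<le> N \<Longrightarrow> j = k"
  by (drule fun_cong[of _ _ c]) (simp add: zeta_conf_def)

lemma zeta_conf_notin_E_set:
  assumes "x \<noteq> c" "1 \<le> j" "j < N"
  shows "zeta_conf N x c j \<notin> E_set N S"
proof
  assume "zeta_conf N x c j \<in> E_set N S"
  then obtain y where e: "zeta_conf N x c j = xi_conf N y" by (auto simp: E_set_def)
  show False
    using fun_cong[OF e, of c] fun_cong[OF e, of x] assms
    by (cases "y = x") (auto simp: zeta_conf_def xi_conf_def)
qed

lemma xi_conf_mem_E_set_iff: "0 < N \<Longrightarrow> xi_conf N x \<in> E_set N S \<longleftrightarrow> x \<in> S"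
  by (auto simp: E_set_def xi_conf_def fun_eq_iff split: if_splits)

lemma sigma_move_zeta_conf_down:
  "x \<noteq> c \<Longrightarrow> 1 \<le> j \<Longrightarrow> j \<le> N \<Longrightarrow> sigma_move c x (zeta_conf N x c j) = zeta_conf N x c (j - 1)"
  by (auto simp: sigma_move_def zeta_conf_def fun_eq_iff)

lemma sigma_move_zeta_conf_up:
  "x \<noteq> c \<Longrightarrow> j < N \<Longrightarrow> sigma_move x c (zeta_conf N x c j) = zeta_conf N x c (Suc j)"
  by (auto simp: sigma_move_def zeta_conf_def fun_eq_iff)

lemma incl_total_rate_zeta_conf:
  assumes "x \<noteq> c" "j \<le> N" "\<And>z. r z z = 0"
  shows "incl_total_rate r d N (zeta_conf N x c j)
    = real (N - j) * (d * (\<Sum>y\<in>UNIV. r x y) + real j * r x c)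
      + real j * (d * (\<Sum>y\<in>UNIV. r c y) + real (N - j) * r c x)"
proof -
  let ?\<eta> = "zeta_conf N x c j"
  have inner: "(\<Sum>y\<in>UNIV. (d + real (?\<eta> y)) * r z y)
      = d * (\<Sum>y\<in>UNIV. r z y) + (real (N - j) * r z x + real j * r z c)" for z
    using sum_zeta_conf[OF assms(1), of N j "r z"]
    by (simp add: distrib_right sum.distrib sum_distrib_left)
  have "incl_total_rate r d N ?\<eta> = (\<Sum>z\<in>UNIV. real (?\<eta> z) * (\<Sum>y\<in>UNIV. (d + real (?\<eta> y)) * r z y))"
    by (simp add: incl_total_rate_eq[OF zeta_conf_mem_config_space[OF assms(1,2)] assms(3)]
        sum_distrib_left mult.assoc)
  also have "\<dots> = real (N - j) * (\<Sum>y\<in>UNIV. (d + real (?\<eta> y)) * r x y)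
      + real j * (\<Sum>y\<in>UNIV. (d + real (?\<eta> y)) * r c y)"
    by (rule sum_zeta_conf[OF assms(1)])
  finally show ?thesis by (simp add: inner assms(3))
qed

section \<open>The segment between two condensed configurations\<close>

definition down_rate :: "('a \<Rightarrow> 'a \<Rightarrow> real) \<Rightarrow> real \<Rightarrow> nat \<Rightarrow> 'a \<Rightarrow> 'a \<Rightarrow> nat \<Rightarrow> real" where
  "down_rate r d N x c j = real j * (d + real (N - j)) * r c x"

definition up_rate :: "('a \<Rightarrow> 'a \<Rightarrow> real) \<Rightarrow> real \<Rightarrow> nat \<Rightarrow> 'a \<Rightarrow> 'a \<Rightarrow> nat \<Rightarrow> real" where
  "up_rate r d N x c j = real (N - j) * (d + real j) * r x c"

text \<open>u is subharmonic for the birth-death chain on the segment that, whenever the inclusion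
  process leaves the segment, is sent to a cemetery where u equals 1.\<close>

definition line_subsolution ::
    "('a::finite \<Rightarrow> 'a \<Rightarrow> real) \<Rightarrow> real \<Rightarrow> nat \<Rightarrow> 'a \<Rightarrow> 'a \<Rightarrow> (nat \<Rightarrow> real) \<Rightarrow> bool" where
  "line_subsolution r d N x c u \<longleftrightarrow> (\<forall>j. 1 \<le> j \<longrightarrow> j < N \<longrightarrow>
     incl_total_rate r d N (zeta_conf N x c j) * u j
       \<le> down_rate r d N x c j * u (j - 1) + up_rate r d N x c j * u (Suc j)
         + (incl_total_rate r d N (zeta_conf N x c j) - down_rate r d N x c j - up_rate r d N x c j))"

lemma incl_total_rate_zeta_conf_bounds:
  fixes r :: "'a::finite \<Rightarrow> 'a \<Rightarrow> real"
  assumes r_nonneg: "\<And>x y. 0 \<le> r x y" and r_diag: "\<And>x. r x x = 0"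
    and dd: "0 \<le> dd" and xc: "x \<noteq> c" and j: "j \<le> N"
  defines "T \<equiv> incl_total_rate r dd N (zeta_conf N x c j)"
    and "K \<equiv> (\<Sum>y\<in>UNIV. r x y) + (\<Sum>y\<in>UNIV. r c y)"
  shows "down_rate r dd N x c j + up_rate r dd N x c j \<le> T"
    and "T \<le> down_rate r dd N x c j + up_rate r dd N x c j + dd * real N * K"
proof -
  define Rx Rc where "Rx = (\<Sum>y\<in>UNIV. r x y)" and "Rc = (\<Sum>y\<in>UNIV. r c y)"
  have R: "r x c \<le> Rx" "r c x \<le> Rc"
    unfolding Rx_def Rc_def by (auto intro: member_le_sum r_nonneg)
  have escape: "T - down_rate r dd N x c j - up_rate r dd N x c j
      = dd * (real (N - j) * (Rx - r x c) + real j * (Rc - r c x))"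
    using incl_total_rate_zeta_conf[where r=r and d=dd, OF xc j r_diag]
    by (simp add: T_def down_rate_def up_rate_def Rx_def Rc_def algebra_simps)
  have "0 \<le> real (N - j) * (Rx - r x c) + real j * (Rc - r c x)"
    using R by simp
  then show "down_rate r dd N x c j + up_rate r dd N x c j \<le> T"
    using escape mult_nonneg_nonneg[OF dd] by fastforce
  have "real (N - j) * (Rx - r x c) + real j * (Rc - r c x) \<le> real (N - j) * K + real j * K"
    using R r_nonneg[of x c] r_nonneg[of c x]
    by (intro add_mono mult_left_mono) (auto simp: K_def Rx_def Rc_def)
  also have "\<dots> = real N * K" using j by (simp add: algebra_simps flip: distrib_right)
  finally show "T \<le> down_rate r dd N x c j + up_rate r dd N x c j + dd * real N * K"
    using escape mult_left_mono[OF _ dd] by fastforce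
qed

lemma incl_jump_zeta_conf_neighbours:
  fixes r :: "'a::finite \<Rightarrow> 'a \<Rightarrow> real" and x c :: 'a and dd :: real and N j :: nat
  defines "T \<equiv> incl_total_rate r dd N (zeta_conf N x c j)"
  assumes r_nonneg: "\<And>x y. 0 \<le> r x y" and r_diag: "\<And>x. r x x = 0"
    and dd: "0 < dd" and xc: "x \<noteq> c" and rcx: "0 < r c x" and j: "1 \<le> j" "j < N"
  shows "0 < T"
    and "down_rate r dd N x c j / T \<le> incl_jump r dd N (zeta_conf N x c j) (zeta_conf N x c (j - 1))"
    and "up_rate r dd N x c j / T \<le> incl_jump r dd N (zeta_conf N x c j) (zeta_conf N x c (Suc j))"
proof -
  let ?z = "zeta_conf N x c"
  have "0 < down_rate r dd N x c j" using dd j rcx by (simp add: down_rate_def)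
  moreover have "0 \<le> up_rate r dd N x c j" using dd r_nonneg by (simp add: up_rate_def)
  moreover have "down_rate r dd N x c j + up_rate r dd N x c j \<le> T"
    unfolding T_def using dd j xc by (intro incl_total_rate_zeta_conf_bounds r_nonneg r_diag) auto
  ultimately show "0 < T" by linarith
  have distinct: "?z (j - 1) \<noteq> ?z j" "?z (Suc j) \<noteq> ?z j"
    using zeta_conf_inj[OF _ xc] j by fastforce+
  show "down_rate r dd N x c j / T \<le> incl_jump r dd N (?z j) (?z (j - 1))"
    unfolding incl_jump_def T_def[symmetric]
    using incl_rate_ge[where r=r and d=dd, OF r_nonneg _ sigma_move_zeta_conf_down[OF xc j(1)] distinct(1)]
      dd j \<open>0 < T\<close> xc
    by (intro divide_right_mono) (auto simp: down_rate_def zeta_conf_def)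
  show "up_rate r dd N x c j / T \<le> incl_jump r dd N (?z j) (?z (Suc j))"
    unfolding incl_jump_def T_def[symmetric]
    using incl_rate_ge[where r=r and d=dd, OF r_nonneg _ sigma_move_zeta_conf_up[OF xc j(2)] distinct(2)]
      dd j \<open>0 < T\<close> xc
    by (intro divide_right_mono) (auto simp: up_rate_def zeta_conf_def)
qed

lemma line_subsolution_incl_hit:
  fixes r :: "'a::finite \<Rightarrow> 'a \<Rightarrow> real"
  assumes r_nonneg: "\<And>x y. 0 \<le> r x y" and r_diag: "\<And>x. r x x = 0"
    and dd: "0 < dd" and xc: "x \<noteq> c" and rcx: "0 < r c x"
    and interior: "\<And>j. 1 \<le> j \<Longrightarrow> j < N \<Longrightarrow> zeta_conf N x c j \<notin> \<A> \<union> \<B>"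
  defines "h \<equiv> \<lambda>j. incl_hit r dd N \<A> \<B> (zeta_conf N x c j)"
  shows "line_subsolution r dd N x c (\<lambda>j. 1 - h j)"
    and "line_subsolution r dd N x c h"
proof -
  interpret substochastic "incl_jump r dd N" "config_space N"
    by (rule substochastic_incl_jump) (use r_nonneg dd in auto)
  let ?z = "zeta_conf N x c"
  have neighbours: "Dn * h (j - 1) + Up * h (Suc j) \<le> T * h j \<and>
      T * h j \<le> Dn * h (j - 1) + Up * h (Suc j) + (T - Dn - Up)"
    if j: "1 \<le> j" "j < N" and T: "T = incl_total_rate r dd N (?z j)"
      and Dn: "Dn = down_rate r dd N x c j" and Up: "Up = up_rate r dd N x c j" for j T Dn Up
  proof -
    note jump = incl_jump_zeta_conf_neighbours[OF r_nonneg r_diag dd xc rcx j, folded T Dn Up]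
    have "0 \<le> Dn / T" "0 \<le> Up / T"
      using jump(1) dd rcx r_nonneg[of x c] j by (simp_all add: Dn Up down_rate_def up_rate_def)
    moreover have "?z j \<in> config_space N" "?z (j - 1) \<in> config_space N" "?z (Suc j) \<in> config_space N"
      using zeta_conf_mem_config_space[OF xc] j by auto
    moreover have "?z (j - 1) \<noteq> ?z (Suc j)" using zeta_conf_inj[OF _ xc] j by fastforce
    ultimately have "Dn / T * h (j - 1) + Up / T * h (Suc j) \<le> h j"
      "h j \<le> Dn / T * h (j - 1) + Up / T * h (Suc j) + (1 - Dn / T - Up / T)"
      using hit_prob_two_neighbours[of "?z j" _ _ "?z (j - 1)" "?z (Suc j)" "Dn / T" "Up / T"]
        jump(2,3) interior[OF j]
      unfolding h_def incl_hit_def by auto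
    moreover have "T * (Dn / T * h (j - 1) + Up / T * h (Suc j)) = Dn * h (j - 1) + Up * h (Suc j)"
      "T * (1 - Dn / T - Up / T) = T - Dn - Up"
      using jump(1) by (simp_all add: field_simps)
    ultimately show ?thesis
      using mult_left_mono[of _ _ T] jump(1) by (smt (verit) distrib_left)
  qed
  show "line_subsolution r dd N x c (\<lambda>j. 1 - h j)" "line_subsolution r dd N x c h"
    using neighbours by (auto simp: line_subsolution_def algebra_simps)
qed

section \<open>A maximum principle and an explicit barrier\<close>

lemma birth_death_comparison:
  fixes u v Dn Up T :: "nat \<Rightarrow> real"
  assumes ends: "u 0 \<le> v 0" "u N \<le> v N" and u_le_1: "\<And>j. j \<le> N \<Longrightarrow> u j \<le> 1"
    and rates: "\<And>j. 1 \<le> j \<Longrightarrow> j < N \<Longrightarrow> 0 \<le> Dn j \<and> 0 \<le> Up j \<and> Dn j + Up j \<le> T j"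
    and sub: "\<And>j. 1 \<le> j \<Longrightarrow> j < N \<Longrightarrow>
      T j * u j \<le> Dn j * u (j - 1) + Up j * u (Suc j) + (T j - Dn j - Up j)"
    and super: "\<And>j. 1 \<le> j \<Longrightarrow> j < N \<Longrightarrow> v j < 1 \<Longrightarrow>
      Dn j * v (j - 1) + Up j * v (Suc j) + (T j - Dn j - Up j) < T j * v j"
    and j: "j \<le> N"
  shows "u j \<le> v j"
proof (rule ccontr)
  assume "\<not> u j \<le> v j"
  define w where "w k = u k - v k" for k
  define M where "M = Max (w ` {..N})"
  have w_le_M: "w k \<le> M" if "k \<le> N" for k unfolding M_def by (rule Max_ge) (use that in auto)
  have "0 < M" using w_le_M[OF j] \<open>\<not> u j \<le> v j\<close> by (simp add: w_def)
  obtain k where k: "k \<le> N" "w k = M"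
    using Max_in[of "w ` {..N}"] unfolding M_def[symmetric] by auto
  have "0 < u k - v k" using k(2) \<open>0 < M\<close> by (simp add: w_def)
  have "k \<noteq> 0"
  proof
    assume "k = 0"
    then show False using \<open>0 < u k - v k\<close> ends(1) by simp
  qed
  moreover have "k \<noteq> N"
  proof
    assume "k = N"
    then show False using \<open>0 < u k - v k\<close> ends(2) by simp
  qed
  ultimately have k_interior: "1 \<le> k" "k < N" using k(1) by auto
  have "v k < 1" using u_le_1[OF k(1)] k(2) \<open>0 < M\<close> by (simp add: w_def)
  note rates_k = rates[OF k_interior]
  have "T k * w k < Dn k * w (k - 1) + Up k * w (Suc k)"
    using sub[OF k_interior] super[OF k_interior \<open>v k < 1\<close>] by (simp add: w_def algebra_simps)
  also have "\<dots> \<le> Dn k * M + Up k * M"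
    using rates_k w_le_M[of "k - 1"] w_le_M[of "Suc k"] k_interior by (intro add_mono mult_left_mono) auto
  also have "\<dots> \<le> T k * M" using rates_k \<open>0 < M\<close> by (simp flip: distrib_right)
  finally show False using k(2) by simp
qed

lemma harm_le_1_plus_ln: "i \<le> N \<Longrightarrow> 1 \<le> N \<Longrightarrow> (harm i :: real) \<le> 1 + ln (real N)"
proof (cases "i = 0")
  case False
  assume "i \<le> N"
  have "harm i - ln (real i) \<le> harm 1 - ln (real (1::nat))"
    by (rule euler_mascheroni_sequence_decreasing) (use False in auto)
  moreover have "ln (real i) \<le> ln (real N)" using False \<open>i \<le> N\<close> by simp
  ultimately show ?thesis by (simp add: harm_def)
qed (simp add: harm_def)

text \<open>The harmonic numbers absorb the O(d N) escape rate, the geometric term solves the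
  drift equation; J is chosen so that N - j > N/4 below J, while j \<le> N/2 stays N/4 away from J.\<close>

definition barrier :: "real \<Rightarrow> real \<Rightarrow> nat \<Rightarrow> nat \<Rightarrow> real" where
  "barrier \<sigma> \<omega> J j = (if j < J then \<sigma> * harm j + \<omega> ^ (J - j) else 1)"

lemma barrier_drift:
  fixes \<sigma> \<omega> Dn Up :: real
  assumes s: "0 \<le> \<sigma>" and om: "0 < \<omega>" "\<omega> < 1" and j: "1 \<le> j" "j < J"
    and Dn: "0 \<le> Dn" and Up: "0 \<le> Up" "Up \<le> \<omega> * Dn"
  defines "v \<equiv> barrier \<sigma> \<omega> J"
  shows "Dn * \<sigma> * (1 - \<omega>) / real j \<le> Dn * (v j - v (j - 1)) - Up * (v (Suc j) - v j)"
proof -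
  define q where "q = \<omega> ^ (J - Suc j)"
  define b where "b = \<sigma> / real (Suc j) + q * (1 - \<omega>)"
  have q0: "0 \<le> q" using om by (simp add: q_def)
  have harm_j: "harm j = harm (j - 1) + 1 / real j"
    using j harm_Suc[of "j - 1"] by (simp add: divide_inverse)
  have "J - j = Suc (J - Suc j)" "J - (j - 1) = Suc (Suc (J - Suc j))" using j by simp_all
  then have pow_j: "\<omega> ^ (J - j) = \<omega> * q" and pow_j1: "\<omega> ^ (J - (j - 1)) = \<omega> * (\<omega> * q)"
    by (simp_all add: q_def)
  have step_down: "v j - v (j - 1) = \<sigma> / real j + \<omega> * q * (1 - \<omega>)"
    using j pow_j pow_j1 harm_j by (simp add: v_def barrier_def algebra_simps)
  have step_up: "v (Suc j) - v j \<le> b"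
  proof (cases "Suc j < J")
    case True
    then show ?thesis using pow_j by (simp add: v_def barrier_def b_def q_def harm_Suc algebra_simps divide_inverse)
  next
    case False
    then have "J = Suc j" using j by simp
    then have "v (Suc j) - v j = 1 - \<sigma> * harm j - \<omega>" and "b = \<sigma> / real (Suc j) + (1 - \<omega>)"
      by (simp_all add: v_def barrier_def b_def q_def)
    moreover have "0 \<le> \<sigma> * harm j" "0 \<le> \<sigma> / real (Suc j)" using s by (simp_all add: harm_nonneg)
    ultimately show ?thesis by linarith
  qed
  have "Up * (v (Suc j) - v j) \<le> \<omega> * Dn * b"
  proof -
    have "Up * (v (Suc j) - v j) \<le> Up * b" using step_up Up by (intro mult_left_mono)
    also have "\<dots> \<le> \<omega> * Dn * b" using Up s q0 om by (intro mult_right_mono) (auto simp: b_def)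
    finally show ?thesis .
  qed
  moreover have "(1 - \<omega>) / real j \<le> 1 / real j - \<omega> / real (Suc j)"
    using j om by (simp add: diff_divide_distrib divide_left_mono)
  then have "Dn * \<sigma> * ((1 - \<omega>) / real j) \<le> Dn * \<sigma> * (1 / real j - \<omega> / real (Suc j))"
    using Dn s by (intro mult_left_mono) auto
  then have "Dn * \<sigma> * (1 - \<omega>) / real j \<le> Dn * \<sigma> * (1 / real j - \<omega> / real (Suc j))"
    by simp
  moreover have "Dn * \<sigma> * (1 / real j - \<omega> / real (Suc j)) = Dn * (v j - v (j - 1)) - \<omega> * Dn * b"
    unfolding step_down by (simp add: b_def algebra_simps diff_divide_distrib)
  ultimately show ?thesis by linarith
qed

lemma up_rate_le_down_rate:
  assumes "0 \<le> dd" "0 \<le> r x c" "(1 + dd) * r x c \<le> \<omega> * r c x" "1 \<le> j"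
  shows "up_rate r dd N x c j \<le> \<omega> * down_rate r dd N x c j"
proof -
  have "dd * 1 \<le> dd * real j" using assms by (intro mult_left_mono) auto
  then have "real (N - j) * (dd + real j) \<le> real (N - j) * (real j * (1 + dd))"
    by (intro mult_left_mono) (auto simp: algebra_simps)
  also have "\<dots> \<le> real j * (dd + real (N - j)) * (1 + dd)"
    using assms by (simp add: algebra_simps)
  finally have "up_rate r dd N x c j \<le> real j * (dd + real (N - j)) * (1 + dd) * r x c"
    unfolding up_rate_def using assms(2) by (rule mult_right_mono)
  also have "\<dots> = real j * (dd + real (N - j)) * ((1 + dd) * r x c)" by (simp only: mult.assoc)
  also have "\<dots> \<le> real j * (dd + real (N - j)) * (\<omega> * r c x)"
    using assms by (intro mult_left_mono) auto
  finally show ?thesis by (simp add: down_rate_def algebra_simps)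
qed

lemma barrier_supersolution:
  fixes r :: "'a \<Rightarrow> 'a \<Rightarrow> real" and x c :: 'a and N j :: nat and dd K \<omega> T :: real
  defines "Dn \<equiv> down_rate r dd N x c j" and "Up \<equiv> up_rate r dd N x c j"
    and "v \<equiv> barrier (8 * dd * K / (r c x * (1 - \<omega>))) \<omega> (N - N div 4)"
  assumes dd: "0 < dd" and K: "0 < K" and rxc: "0 \<le> r x c" and rcx: "0 < r c x"
    and om: "0 < \<omega>" "\<omega> < 1" and drift: "(1 + dd) * r x c \<le> \<omega> * r c x"
    and j: "1 \<le> j" "j < N" and vj: "v j < 1"
    and T: "Dn + Up \<le> T" "T \<le> Dn + Up + dd * real N * K"
  shows "Dn * v (j - 1) + Up * v (Suc j) + (T - Dn - Up) < T * v j"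
proof -
  define \<sigma> where "\<sigma> = 8 * dd * K / (r c x * (1 - \<omega>))"
  have \<sigma>: "\<sigma> * (r c x * (1 - \<omega>)) = 8 * dd * K" "0 \<le> \<sigma>"
    using rcx om dd K by (simp_all add: \<sigma>_def)
  have jJ: "j < N - N div 4" using vj by (auto simp: v_def barrier_def split: if_splits)
  have "0 \<le> Dn" "0 \<le> Up" using dd rcx rxc by (simp_all add: Dn_def Up_def down_rate_def up_rate_def)
  then have gain: "Dn * \<sigma> * (1 - \<omega>) / real j \<le> Dn * (v j - v (j - 1)) - Up * (v (Suc j) - v j)"
    using barrier_drift[OF \<sigma>(2) om j(1) jJ] up_rate_le_down_rate[where r=r and x=x and c=c, OF _ rxc drift j(1)] dd
    by (simp add: v_def \<sigma>_def Dn_def Up_def)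
  have "real N / 4 \<le> real (N - j)" using jJ by linarith
  then have "real N / 4 * r c x \<le> Dn / real j"
    using j dd rcx by (simp add: Dn_def down_rate_def mult_right_mono)
  then have "real N / 4 * r c x * (\<sigma> * (1 - \<omega>)) \<le> Dn / real j * (\<sigma> * (1 - \<omega>))"
    using \<sigma>(2) om by (intro mult_right_mono) auto
  also have "\<dots> = Dn * \<sigma> * (1 - \<omega>) / real j" by simp
  also have "real N / 4 * r c x * (\<sigma> * (1 - \<omega>)) = real N / 4 * (\<sigma> * (r c x * (1 - \<omega>)))"
    by (simp only: ac_simps)
  also have "\<dots> = real N / 4 * (8 * dd * K)" by (simp only: \<sigma>(1))
  also have "\<dots> = 2 * (dd * real N * K)" by (simp add: algebra_simps)
  finally have "2 * (dd * real N * K) \<le> Dn * (v j - v (j - 1)) - Up * (v (Suc j) - v j)"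
    using gain by linarith
  moreover have "(T - Dn - Up) * (1 - v j) \<le> dd * real N * K"
  proof -
    have "0 \<le> v j" using jJ \<sigma>(2) om by (simp add: v_def barrier_def harm_nonneg flip: \<sigma>_def)
    then show ?thesis using T mult_left_mono[of "1 - v j" 1 "T - Dn - Up"] by simp
  qed
  moreover have "0 < dd * real N * K" using j dd K by simp
  ultimately have "0 < Dn * (v j - v (j - 1)) - Up * (v (Suc j) - v j) - (T - Dn - Up) * (1 - v j)"
    by linarith
  then show ?thesis by (simp add: algebra_simps)
qed

lemma line_subsolution_le:
  fixes r :: "'a::finite \<Rightarrow> 'a \<Rightarrow> real" and x c :: 'a and u :: "nat \<Rightarrow> real"
  defines "K \<equiv> (\<Sum>y\<in>UNIV. r x y) + (\<Sum>y\<in>UNIV. r c y)"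
  assumes r_nonneg: "\<And>x y. 0 \<le> r x y" and r_diag: "\<And>x. r x x = 0"
    and dd: "0 < dd" and xc: "x \<noteq> c" and rcx: "0 < r c x"
    and om: "0 < \<omega>" "\<omega> < 1" and drift: "(1 + dd) * r x c \<le> \<omega> * r c x"
    and sub: "line_subsolution r dd N x c u" and u0: "u 0 = 0" and u_le_1: "\<And>j. j \<le> N \<Longrightarrow> u j \<le> 1"
    and N: "2 \<le> N" and i: "i \<le> N div 2"
  shows "u i \<le> 8 * dd * K / (r c x * (1 - \<omega>)) * (1 + ln (real N)) + \<omega> ^ (N div 4)"
proof -
  define \<sigma> where "\<sigma> = 8 * dd * K / (r c x * (1 - \<omega>))"
  define J where "J = N - N div 4"
  define v where "v = barrier \<sigma> \<omega> J"
  have "r c x \<le> (\<Sum>y\<in>UNIV. r c y)" by (rule member_le_sum) (auto intro: r_nonneg)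
  moreover have "0 \<le> (\<Sum>y\<in>UNIV. r x y)" by (auto intro: sum_nonneg r_nonneg)
  ultimately have K: "0 < K" using rcx by (simp add: K_def)
  have \<sigma>: "0 \<le> \<sigma>" using dd K om rcx by (simp add: \<sigma>_def)
  have iJ: "i < J" "N div 4 \<le> J - i" using i N unfolding J_def by linarith+
  have "u i \<le> v i"
  proof (rule birth_death_comparison[where Dn="down_rate r dd N x c" and Up="up_rate r dd N x c"
        and T="\<lambda>j. incl_total_rate r dd N (zeta_conf N x c j)"])
    show "u 0 \<le> v 0" using u0 iJ om by (simp add: v_def barrier_def harm_def)
    have "\<not> N < J" by (simp add: J_def)
    then show "u N \<le> v N" using u_le_1[of N] by (simp add: v_def barrier_def)
    fix j assume j: "1 \<le> j" "j < N"
    note T_bounds = incl_total_rate_zeta_conf_bounds[where r=r and dd=dd, OF r_nonneg r_diag _ xc]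
    show "0 \<le> down_rate r dd N x c j \<and> 0 \<le> up_rate r dd N x c j
        \<and> down_rate r dd N x c j + up_rate r dd N x c j \<le> incl_total_rate r dd N (zeta_conf N x c j)"
      using T_bounds(1) dd j r_nonneg[of x c] rcx by (simp add: down_rate_def up_rate_def)
    show "incl_total_rate r dd N (zeta_conf N x c j) * u j \<le> down_rate r dd N x c j * u (j - 1)
        + up_rate r dd N x c j * u (Suc j)
        + (incl_total_rate r dd N (zeta_conf N x c j) - down_rate r dd N x c j - up_rate r dd N x c j)"
      using sub j by (simp add: line_subsolution_def)
    assume "v j < 1"
    then show "down_rate r dd N x c j * v (j - 1) + up_rate r dd N x c j * v (Suc j)
        + (incl_total_rate r dd N (zeta_conf N x c j) - down_rate r dd N x c j - up_rate r dd N x c j)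
        < incl_total_rate r dd N (zeta_conf N x c j) * v j"
      using barrier_supersolution[where r=r and x=x and c=c, OF dd K r_nonneg[of x c] rcx om drift j] T_bounds[of j] dd j
      by (simp add: v_def \<sigma>_def J_def K_def)
  qed (use u_le_1 i in auto)
  also have "v i \<le> \<sigma> * (1 + ln (real N)) + \<omega> ^ (N div 4)"
  proof -
    have "\<sigma> * harm i \<le> \<sigma> * (1 + ln (real N))"
      using harm_le_1_plus_ln[of i N] i N \<sigma> by (intro mult_left_mono) auto
    moreover have "\<omega> ^ (J - i) \<le> \<omega> ^ (N div 4)"
      using iJ om by (intro power_decreasing) auto
    ultimately show ?thesis using iJ by (simp add: v_def barrier_def)
  qed
  finally show ?thesis by (simp add: \<sigma>_def)
qed

lemma line_subsolution_Max_tendsto_0: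
  fixes r :: "'a::finite \<Rightarrow> 'a \<Rightarrow> real" and d :: "nat \<Rightarrow> real" and u :: "nat \<Rightarrow> nat \<Rightarrow> real"
  assumes r_nonneg: "\<And>x y. 0 \<le> r x y" and r_diag: "\<And>x. r x x = 0"
    and d_pos: "\<And>N. 0 < d N" and d_lim: "d \<longlonglongrightarrow> 0"
    and d_log_lim: "(\<lambda>N. d N * ln (real N)) \<longlonglongrightarrow> 0"
    and xc: "x \<noteq> c" and rxc: "0 < r x c" and rcx: "r x c < r c x"
    and sub: "\<And>N. 2 \<le> N \<Longrightarrow> line_subsolution r (d N) N x c (u N)"
    and u0: "\<And>N. 2 \<le> N \<Longrightarrow> u N 0 = 0"
    and u_le_1: "\<And>N j. 2 \<le> N \<Longrightarrow> j \<le> N \<Longrightarrow> u N j \<le> 1"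
  shows "(\<lambda>N. Max {u N i | i. i \<le> N div 2}) \<longlonglongrightarrow> 0"
proof -
  define \<omega> where "\<omega> = (1 + r x c / r c x) / 2"
  define K where "K = (\<Sum>y\<in>UNIV. r x y) + (\<Sum>y\<in>UNIV. r c y)"
  define C where "C = 8 * K / (r c x * (1 - \<omega>))"
  define bound where "bound N = 8 * d N * K / (r c x * (1 - \<omega>)) * (1 + ln (real N)) + \<omega> ^ (N div 4)"
    for N
  define \<delta> where "\<delta> = (\<omega> * r c x - r x c) / r x c"
  have rcx0: "0 < r c x" using rxc rcx by linarith
  have om: "0 < \<omega>" "\<omega> < 1" using rxc rcx rcx0 by (auto simp: \<omega>_def field_simps)
  have "0 < \<delta>" using rcx rxc rcx0 by (simp add: \<delta>_def \<omega>_def field_simps)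
  then have small_d: "eventually (\<lambda>N. d N < \<delta>) sequentially" using d_lim by (rule order_tendstoD(2)[rotated])
  have set_eq: "{u N i | i. i \<le> N div 2} = u N ` {..N div 2}" for N by auto
  have "eventually (\<lambda>N. 0 \<le> Max {u N i | i. i \<le> N div 2}) sequentially"
    using eventually_ge_at_top[of 2]
  proof eventually_elim
    case (elim N)
    have "0 = u N 0" using u0[OF elim] by simp
    also have "u N 0 \<le> Max {u N i | i. i \<le> N div 2}" unfolding set_eq by (rule Max_ge) auto
    finally show ?case .
  qed
  moreover have "eventually (\<lambda>N. Max {u N i | i. i \<le> N div 2} \<le> bound N) sequentially"
    using small_d eventually_ge_at_top[of 2]
  proof eventually_elim
    case (elim N)
    have drift: "(1 + d N) * r x c \<le> \<omega> * r c x"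
      using elim(1) rxc by (simp add: \<delta>_def field_simps)
    have "u N i \<le> bound N" if "i \<le> N div 2" for i
      using line_subsolution_le[where r=r and x=x and c=c and u="u N", OF r_nonneg r_diag d_pos xc
          rcx0 om drift sub[OF elim(2)] u0[OF elim(2)] u_le_1[OF elim(2)] elim(2) that]
      by (simp add: bound_def K_def)
    then show ?case unfolding set_eq by (subst Max_le_iff) auto
  qed
  moreover have "bound \<longlonglongrightarrow> 0"
  proof -
    have "(\<lambda>N. C * (d N + d N * ln (real N)) + \<omega> ^ (N div 4)) \<longlonglongrightarrow> C * (0 + 0) + 0"
      using filterlim_compose[OF LIMSEQ_power_zero[of \<omega>] filterlim_at_top_div_const_nat[of 4]] om
      by (intro tendsto_intros d_lim d_log_lim) auto
    moreover have "bound = (\<lambda>N. C * (d N + d N * ln (real N)) + \<omega> ^ (N div 4))"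
      by (auto simp: bound_def C_def divide_inverse algebra_simps)
    ultimately show ?thesis by simp
  qed
  ultimately show ?thesis by (rule tendsto_sandwich[OF _ _ tendsto_const])
qed

section \<open>Hitting probabilities from the segments\<close>

lemma incl_hit_zeta_conf_tendsto_1:
  fixes r :: "'a::finite \<Rightarrow> 'a \<Rightarrow> real" and d :: "nat \<Rightarrow> real"
  assumes r_nonneg: "\<And>x y. 0 \<le> r x y" and r_diag: "\<And>x. r x x = 0"
    and d_pos: "\<And>N. 0 < d N" and d_lim: "d \<longlonglongrightarrow> 0"
    and d_log_lim: "(\<lambda>N. d N * ln (real N)) \<longlonglongrightarrow> 0"
    and xA: "x \<in> A" and rxc: "0 < r x c" and rcx: "r x c < r c x"
  shows "(\<lambda>N. Max {\<bar>incl_hit r (d N) N (E_set N A) (E_set N B) (zeta_conf N x c i) - 1\<bar>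
                   | i. i \<le> N div 2}) \<longlonglongrightarrow> 0"
proof -
  let ?h = "\<lambda>N i. incl_hit r (d N) N (E_set N A) (E_set N B) (zeta_conf N x c i)"
  have xc: "x \<noteq> c" using rcx by auto
  have h_bounds: "0 \<le> ?h N i" "?h N i \<le> 1" if "i \<le> N" for N i
    using incl_hit_bounds[OF r_nonneg less_imp_le[OF d_pos] zeta_conf_mem_config_space[OF xc that]]
    by auto
  have "(\<lambda>N. Max {1 - ?h N i | i. i \<le> N div 2}) \<longlonglongrightarrow> 0"
  proof (rule line_subsolution_Max_tendsto_0[where r=r and d=d and x=x and c=c, OF r_nonneg r_diag d_pos d_lim d_log_lim xc rxc rcx])
    show "line_subsolution r (d N) N x c (\<lambda>i. 1 - ?h N i)" for N
      using zeta_conf_notin_E_set[OF xc]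
      by (intro line_subsolution_incl_hit(1) r_nonneg r_diag d_pos xc) (use rxc rcx in auto)
    show "1 - ?h N 0 = 0" for N
      using xA by (simp add: zeta_conf_0 incl_hit_def hit_prob_def E_set_def)
    show "1 - ?h N j \<le> 1" if "j \<le> N" for N j
      using h_bounds(1)[OF that] by simp
  qed
  moreover have "{\<bar>?h N i - 1\<bar> | i. i \<le> N div 2} = {1 - ?h N i | i. i \<le> N div 2}" for N
    using h_bounds(2) by (intro Collect_cong ex_cong1) auto
  ultimately show ?thesis by simp
qed

lemma incl_hit_zeta_conf_tendsto_0:
  fixes r :: "'a::finite \<Rightarrow> 'a \<Rightarrow> real" and d :: "nat \<Rightarrow> real"
  assumes r_nonneg: "\<And>x y. 0 \<le> r x y" and r_diag: "\<And>x. r x x = 0"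
    and d_pos: "\<And>N. 0 < d N" and d_lim: "d \<longlonglongrightarrow> 0"
    and d_log_lim: "(\<lambda>N. d N * ln (real N)) \<longlonglongrightarrow> 0"
    and disj: "A \<inter> B = {}" and xB: "x \<in> B" and rxc: "0 < r x c" and rcx: "r x c < r c x"
  shows "(\<lambda>N. Max {incl_hit r (d N) N (E_set N A) (E_set N B) (zeta_conf N x c i)
                   | i. i \<le> N div 2}) \<longlonglongrightarrow> 0"
proof (rule line_subsolution_Max_tendsto_0[where r=r and d=d and x=x and c=c, OF r_nonneg r_diag d_pos d_lim d_log_lim _ rxc rcx])
  show xc: "x \<noteq> c" using rcx by auto
  show "line_subsolution r (d N) N x c (\<lambda>i. incl_hit r (d N) N (E_set N A) (E_set N B) (zeta_conf N x c i))"
    for N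
    using zeta_conf_notin_E_set[OF xc]
    by (intro line_subsolution_incl_hit(2) r_nonneg r_diag d_pos xc) (use rxc rcx in auto)
  show "incl_hit r (d N) N (E_set N A) (E_set N B) (zeta_conf N x c 0) = 0" if "2 \<le> N" for N
  proof -
    have "xi_conf N x \<notin> E_set N A" "xi_conf N x \<in> E_set N B"
      using xB disj that by (auto simp: xi_conf_mem_E_set_iff)
    then show ?thesis by (simp add: zeta_conf_0 incl_hit_def hit_prob_def)
  qed
  show "incl_hit r (d N) N (E_set N A) (E_set N B) (zeta_conf N x c j) \<le> 1" if "j \<le> N" for N j
    using incl_hit_bounds(2)[OF r_nonneg less_imp_le[OF d_pos] zeta_conf_mem_config_space[OF xc that]] .
qed

theorem lemma4p4:
  fixes r :: "'a::finite \<Rightarrow> 'a \<Rightarrow> real" and m :: "'a \<Rightarrow> real" and d :: "nat \<Rightarrow> real"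
    and A B :: "'a set" and a b c :: 'a
  assumes r_nonneg: "\<And>x y. 0 \<le> r x y"
    and r_diag: "\<And>x. r x x = 0"
    and irred: "irreducible_rates r"
    and m_nonneg: "\<And>x. 0 \<le> m x"
    and m_prob: "(\<Sum>x\<in>UNIV. m x) = 1"
    and reversible: "\<And>x y. m x * r x y = m y * r y x"
    and d_pos: "\<And>N. 0 < d N"
    and d_lim: "d \<longlonglongrightarrow> 0"
    and d_log_lim: "(\<lambda>N. d N * ln (real N)) \<longlonglongrightarrow> 0"
    and disj: "A \<inter> B = {}"
    and aA: "a \<in> A" and bB: "b \<in> B"
    and ca: "r c a > r a c" and ac: "r a c > 0"
    and cb: "r c b > r b c" and bc: "r b c > 0"
  shows "(\<lambda>N. Max {\<bar>incl_hit r (d N) N (E_set N A) (E_set N B) (zeta_conf N a c i) - 1\<bar>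
                   | i. i \<le> N div 2}) \<longlonglongrightarrow> 0
       \<and> (\<lambda>N. Max {incl_hit r (d N) N (E_set N A) (E_set N B) (zeta_conf N b c i)
                   | i. i \<le> N div 2}) \<longlonglongrightarrow> 0"
  using incl_hit_zeta_conf_tendsto_1[where r=r and d=d and c=c, OF r_nonneg r_diag d_pos d_lim d_log_lim aA ac ca]
    incl_hit_zeta_conf_tendsto_0[where r=r and d=d and c=c, OF r_nonneg r_diag d_pos d_lim d_log_lim disj bB bc cb]
  by blast

end
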